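(* Consider the system $$\dot x = \vartheta,\qquad \dot\vartheta = -\lambda\vartheta - xu + x - x^3,\qquad \dot u = -\alpha u - \beta x\vartheta,$$ with parameters $\alpha>0$, $\lambda\ge 0$, $\beta>0$ satisfying $$\alpha\big(\sqrt{\lambda^2+4}+\lambda\big) > 2(\beta-2).$$ Let $L>0$ satisfy $L>\frac{\sqrt{\lambda^2+4}-\lambda}{2}$ and $\frac{\beta L}{\alpha+2L}<1$, set $K=\frac{\beta L}{\alpha+2L}$ and $M=1-K$, let $\vartheta_0>0$ be arbitrary, and let $x_0$ be the positive root of the equation $$\vartheta_0^2 + x^2 - \frac{M}{2}x^4 = 0.$$ Suppose that $$\lambda^2 > 4\Big[\Big(1+\frac{\beta}{2}\Big)x_0^2 - 1\Big].$$ Let $(x^+(t),\vartheta^+(t),u^+(t))$ be the positive outgoing separatrix of the zero saddle, i.e. the nontrivial solution with $\lim_{t\to-\infty}(x^+,\vartheta^+,u^+)(t)=(0,0,0)$ and $x^+(t)>0$ for all sufficiently negative $t$. Then $x^+(t)>0$ for all $t\in(-\infty,+\infty)$.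
   Context: The origin $(0,0,0)$ is a saddle equilibrium of the system with a one-dimensional unstable manifold; its positive separatrix is the branch of the unstable manifold along which $x>0$ as $t\to-\infty$. *)

theory Defs
  imports "HOL-Analysis.Analysis"
begin

end

theory Submission
  imports Defs "HOL-Real_Asymp.Real_Asymp"
begin

(* Suppose x has a first zero t1.  Three bounds are propagated along (-infinity, t1), each
   through an integrating factor: if q' + a q >= 0 with a > 0 and q bounded at -infinity,
   then e^(a t) q(t) is nondecreasing and tends to 0, so q >= 0.
   First, th < L x and u + K x^2 >= 0, by a first-exit argument for the cone th < L x.
   Second, x < x0: the energy th^2 - x^2 + (1 - K)/2 x^4 does not increase while x and th are
   positive, it lies below th0^2 at every zero of th with 0 < x < x0, and it is at least
   th0^2 when x first reaches x0.
   Third, u <= beta/2 (x0^2 - x^2), which gives th >= r x for a constant r, so that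
   e^(-r t) x(t) is nondecreasing and x(t1) > 0. *)

lemma nonneg_if_deriv_nonneg_from_bot:
  fixes f f' :: "real \<Rightarrow> real"
  assumes deriv: "\<And>t. (f has_real_derivative f' t) (at t)"
    and nonneg: "\<And>t. t < b \<Longrightarrow> 0 \<le> f' t"
    and lim: "(f \<longlongrightarrow> 0) at_bot"
    and "t \<le> b"
  shows "0 \<le> f t"
proof -
  have "f s \<le> f t" if "s \<le> t" for s
  proof (rule DERIV_nonneg_imp_increasing_open[OF that])
    show "continuous_on {s..t} f"
      using deriv by (meson DERIV_isCont continuous_at_imp_continuous_on)
  qed (use deriv nonneg \<open>t \<le> b\<close> in force)
  then have "\<forall>\<^sub>F s in at_bot. f s \<le> f t"
    by (auto simp: eventually_at_bot_linorder)
  then show ?thesis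
    using tendsto_upperbound[OF lim _ trivial_limit_at_bot_linorder] by blast
qed

lemma exp_mult_tendsto_0_at_bot:
  fixes q :: "real \<Rightarrow> real"
  assumes "0 < a" and "(q \<longlongrightarrow> l) at_bot"
  shows "((\<lambda>t. exp (a * t) * q t) \<longlongrightarrow> 0) at_bot"
proof -
  have "((\<lambda>t. exp (a * t)) \<longlongrightarrow> 0) at_bot"
    using \<open>0 < a\<close> by real_asymp
  from tendsto_mult[OF this assms(2)] show ?thesis
    by simp
qed

lemma integrating_factor_nonneg:
  fixes q q' :: "real \<Rightarrow> real"
  assumes "0 < a"
    and deriv: "\<And>t. (q has_real_derivative q' t) (at t)"
    and nonneg: "\<And>t. t < b \<Longrightarrow> 0 \<le> q' t + a * q t"
    and lim: "(q \<longlongrightarrow> l) at_bot"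
    and "t \<le> b"
  shows "0 \<le> q t"
proof -
  have "0 \<le> exp (a * t) * q t"
  proof (rule nonneg_if_deriv_nonneg_from_bot[where f = "\<lambda>t. exp (a * t) * q t"
        and f' = "\<lambda>t. exp (a * t) * (q' t + a * q t)"])
    show "((\<lambda>t. exp (a * t) * q t) has_real_derivative exp (a * t) * (q' t + a * q t)) (at t)"
      for t by (rule derivative_eq_intros deriv refl | simp add: algebra_simps)+
  qed (use nonneg exp_mult_tendsto_0_at_bot[OF \<open>0 < a\<close> lim] \<open>t \<le> b\<close> in auto)
  then show ?thesis
    by (simp add: zero_le_mult_iff)
qed

lemma integrating_factor_pos:
  fixes q q' :: "real \<Rightarrow> real"
  assumes "0 < a"
    and deriv: "\<And>t. (q has_real_derivative q' t) (at t)"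
    and pos: "\<And>t. t \<le> b \<Longrightarrow> 0 < q' t + a * q t"
    and lim: "(q \<longlongrightarrow> l) at_bot"
  shows "0 < q b"
proof -
  have "0 < exp (a * b) * q b"
  proof (rule DERIV_pos_imp_increasing_at_bot[OF _ exp_mult_tendsto_0_at_bot[OF \<open>0 < a\<close> lim]])
    fix t :: real
    assume "t \<le> b"
    have "((\<lambda>t. exp (a * t) * q t) has_real_derivative exp (a * t) * (q' t + a * q t)) (at t)"
      by (rule derivative_eq_intros deriv refl | simp add: algebra_simps)+
    then show "\<exists>y. ((\<lambda>t. exp (a * t) * q t) has_real_derivative y) (at t) \<and> 0 < y"
      using pos[OF \<open>t \<le> b\<close>] by auto
  qed
  then show ?thesis
    by (simp add: zero_less_mult_iff)
qed

lemma first_crossing: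
  fixes f :: "real \<Rightarrow> real"
  assumes cont: "continuous_on UNIV f"
    and neg: "\<forall>\<^sub>F t in at_bot. f t < 0"
    and "0 \<le> f t"
  obtains s where "s \<le> t" "0 \<le> f s" "\<And>r. r < s \<Longrightarrow> f r < 0"
proof -
  define C where "C = {s. s \<le> t \<and> 0 \<le> f s}"
  obtain T where T: "\<And>r. r \<le> T \<Longrightarrow> f r < 0"
    using neg by (auto simp: eventually_at_bot_linorder)
  have "closed C"
    unfolding C_def by (intro closed_Collect_conj closed_Collect_le continuous_intros cont)
  moreover have "C \<noteq> {}"
    using \<open>0 \<le> f t\<close> by (auto simp: C_def)
  moreover have bdd: "bdd_below C"
  proof (rule bdd_belowI)
    show "T \<le> r" if "r \<in> C" for r
      using that T[of r] by (fastforce simp: C_def not_le[symmetric])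
  qed
  ultimately have "Inf C \<in> C"
    by (intro closed_contains_Inf)
  moreover have "f r < 0" if "r < Inf C" for r
    using that cInf_lower[OF _ bdd, of r] \<open>Inf C \<in> C\<close> by (force simp: C_def)
  ultimately show ?thesis
    using that by (auto simp: C_def)
qed

lemma deriv_nonneg_at_first_crossing:
  fixes f :: "real \<Rightarrow> real"
  assumes "(f has_real_derivative D) (at s)" and "0 \<le> f s" and "\<And>r. r < s \<Longrightarrow> f r < 0"
  shows "0 \<le> D"
proof (rule ccontr)
  assume "\<not> 0 \<le> D"
  then obtain d where "0 < d" "\<And>h. 0 < h \<Longrightarrow> h < d \<Longrightarrow> f s < f (s - h)"
    using DERIV_neg_dec_left[OF assms(1)] by force
  then have "f s < f (s - d / 2)"
    by simp
  then show False
    using assms(2) assms(3)[of "s - d / 2"] \<open>0 < d\<close> by simp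
qed

lemma pos_on_left_nbhd:
  fixes f :: "real \<Rightarrow> real"
  assumes deriv: "(f has_real_derivative D) (at s)"
    and "0 \<le> f s" and "f s = 0 \<Longrightarrow> D < 0"
  obtains d where "0 < d" "\<And>h. 0 < h \<Longrightarrow> h < d \<Longrightarrow> 0 < f (s - h)"
proof (cases "f s = 0")
  case True
  then show ?thesis
    using DERIV_neg_dec_left[OF deriv] assms(3) that by force
next
  case False
  then have "\<forall>\<^sub>F r in at s. 0 < f r"
    using DERIV_isCont[OF deriv] \<open>0 \<le> f s\<close> unfolding isCont_def
    by (intro order_tendstoD(1)) auto
  then obtain d where "0 < d" "\<And>r. r \<noteq> s \<Longrightarrow> dist r s < d \<Longrightarrow> 0 < f r"
    by (auto simp: eventually_at)
  then show ?thesis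
    using that[of d] by (auto simp: dist_real_def)
qed

lemma last_zero_before:
  fixes f :: "real \<Rightarrow> real"
  assumes cont: "continuous_on UNIV f"
    and "0 < d" and left: "\<And>h. 0 < h \<Longrightarrow> h < d \<Longrightarrow> 0 < f (s - h)"
  obtains "\<And>r. r < s \<Longrightarrow> 0 < f r"
    | r0 where "r0 < s" "f r0 = 0" "\<And>r. r0 < r \<Longrightarrow> r < s \<Longrightarrow> 0 < f r"
proof (cases "\<exists>r \<le> s - d / 2. f r \<le> 0")
  case False
  have "0 < f r" if "r < s" for r
  proof (cases "r \<le> s - d / 2")
    case True
    then show ?thesis
      using False by auto
  next
    case False
    then show ?thesis
      using left[of "s - r"] \<open>r < s\<close> by simp
  qed
  then show ?thesis
    using that(1) by blast
next
  case True
  define C where "C = {r. r \<le> s - d / 2 \<and> f r \<le> 0}"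
  have "closed C"
    unfolding C_def by (intro closed_Collect_conj closed_Collect_le continuous_intros cont)
  moreover have "C \<noteq> {}"
    using True by (auto simp: C_def)
  moreover have bdd: "bdd_above C"
    by (rule bdd_aboveI[of _ "s - d / 2"]) (auto simp: C_def)
  ultimately have "Sup C \<in> C"
    by (intro closed_contains_Sup)
  then have r0: "Sup C < s" "f (Sup C) \<le> 0"
    using \<open>0 < d\<close> by (auto simp: C_def)
  have after: "0 < f r" if "Sup C < r" "r < s" for r
  proof (cases "r \<le> s - d / 2")
    case True
    then show ?thesis
      using that cSup_upper[OF _ bdd, of r] by (force simp: C_def)
  next
    case False
    then show ?thesis
      using left[of "s - r"] that by simp
  qed
  have "0 \<le> f (Sup C)"
  proof (rule tendsto_lowerbound)
    show "(f \<longlongrightarrow> f (Sup C)) (at_right (Sup C))"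
      using cont unfolding continuous_on_eq_continuous_at[OF open_UNIV] isCont_def
      by (meson UNIV_I at_le tendsto_mono top_greatest)
    show "\<forall>\<^sub>F r in at_right (Sup C). 0 \<le> f r"
      using eventually_at_right_real[OF r0(1)] by eventually_elim (use after in force)
  qed (simp add: trivial_limit_at_right_real)
  then show ?thesis
    using that(2)[of "Sup C"] r0 after by simp
qed

lemma quartic_strict_mono:
  fixes M a b :: real
  assumes "2 < M * (a^2 + b^2)" and "0 \<le> a" and "a < b"
  shows "M / 2 * a^4 - a^2 < M / 2 * b^4 - b^2"
proof -
  have "0 < b^2 - a^2"
    using assms(2,3) by (simp add: power_strict_mono)
  moreover have "0 < M / 2 * (a^2 + b^2) - 1"
    using assms(1) by simp
  ultimately have "0 < (b^2 - a^2) * (M / 2 * (a^2 + b^2) - 1)"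
    by simp
  also have "\<dots> = (M / 2 * b^4 - b^2) - (M / 2 * a^4 - a^2)"
    by (simp add: field_simps power2_eq_square power4_eq_xxxx)
  finally show ?thesis
    by simp
qed

lemma quadratic_pos_above_root:
  fixes lam L :: real
  assumes "(sqrt (lam^2 + 4) - lam) / 2 < L"
  shows "0 < L^2 + lam * L - 1"
proof -
  have "sqrt (lam^2 + 4) < 2 * L + lam"
    using assms by simp
  then have "sqrt (lam^2 + 4)^2 < (2 * L + lam)^2"
    by (intro power_strict_mono) auto
  then have "lam^2 + 4 < (2 * L + lam)^2"
    by simp
  then show ?thesis
    by (simp add: algebra_simps power2_eq_square)
qed

locale separatrix_solution =
  fixes \<alpha> lam \<beta> :: real and x th u :: "real \<Rightarrow> real"
  assumes alpha_pos: "0 < \<alpha>" and lam_nonneg: "0 \<le> lam" and beta_pos: "0 < \<beta>"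
    and x_deriv: "\<And>t. (x has_real_derivative th t) (at t)"
    and th_deriv: "\<And>t. (th has_real_derivative (- lam * th t - x t * u t + x t - x t ^ 3)) (at t)"
    and u_deriv: "\<And>t. (u has_real_derivative (- \<alpha> * u t - \<beta> * x t * th t)) (at t)"
    and x_tendsto: "(x \<longlongrightarrow> 0) at_bot"
    and th_tendsto: "(th \<longlongrightarrow> 0) at_bot"
    and u_tendsto: "(u \<longlongrightarrow> 0) at_bot"
begin

lemma continuous_on_x: "continuous_on UNIV x"
  using x_deriv by (meson DERIV_isCont continuous_at_imp_continuous_on)

lemma continuous_on_th: "continuous_on UNIV th"
  using th_deriv by (meson DERIV_isCont continuous_at_imp_continuous_on)

lemma below_cone_near_bot:
  assumes "0 < L" and slope: "0 < L^2 + lam * L - 1" and "\<forall>\<^sub>F t in at_bot. 0 < x t"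
  shows "\<forall>\<^sub>F t in at_bot. th t < L * x t"
proof -
  have "((\<lambda>t. u t + x t^2) \<longlongrightarrow> 0 + 0^2) at_bot"
    by (intro tendsto_intros u_tendsto x_tendsto)
  then have "\<forall>\<^sub>F t in at_bot. - (L^2 + lam * L - 1) < u t + x t^2"
    using slope by (intro order_tendstoD(1)) auto
  with assms(3) have "\<forall>\<^sub>F t in at_bot. 0 < x t \<and> - (L^2 + lam * L - 1) < u t + x t^2"
    by (rule eventually_conj)
  then obtain T where T: "\<And>t. t \<le> T \<Longrightarrow> 0 < x t \<and> - (L^2 + lam * L - 1) < u t + x t^2"
    unfolding eventually_at_bot_linorder by blast
  have "0 < L * x t - th t" if "t \<le> T" for t
  proof (rule integrating_factor_pos[where a = "lam + L" and q = "\<lambda>t. L * x t - th t"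
        and b = t and l = "L * 0 - 0"])
    show "0 < lam + L"
      using lam_nonneg \<open>0 < L\<close> by simp
    show "((\<lambda>t. L * x t - th t) has_real_derivative
        L * th s - (- lam * th s - x s * u s + x s - x s ^ 3)) (at s)" for s
      by (intro DERIV_diff DERIV_cmult x_deriv th_deriv)
    show "0 < L * th s - (- lam * th s - x s * u s + x s - x s ^ 3) + (lam + L) * (L * x s - th s)"
      if "s \<le> t" for s
    proof -
      have "0 < x s * (L^2 + lam * L - 1 + u s + x s^2)"
        using T[of s] that \<open>t \<le> T\<close> by simp
      then show ?thesis
        by (simp add: algebra_simps power2_eq_square power3_eq_cube)
    qed
    show "((\<lambda>t. L * x t - th t) \<longlongrightarrow> L * 0 - 0) at_bot"
      by (intro tendsto_intros x_tendsto th_tendsto)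
  qed
  then show ?thesis
    by (auto simp: eventually_at_bot_linorder)
qed

lemma u_lower_bound_below_cone:
  assumes "0 < L" and K: "K * (\<alpha> + 2 * L) = \<beta> * L"
    and below: "\<And>r. r < b \<Longrightarrow> 0 < x r \<and> th r \<le> L * x r"
  shows "0 \<le> u b + K * x b^2"
proof (rule integrating_factor_nonneg[where a = \<alpha> and q = "\<lambda>t. u t + K * x t^2" and t = b and b = b
      and l = "0 + K * 0^2"])
  show "((\<lambda>t. u t + K * x t^2) has_real_derivative
      - \<alpha> * u s - \<beta> * x s * th s + K * (2 * x s * th s)) (at s)" for s
    by (rule derivative_eq_intros u_deriv x_deriv refl | simp)+
  have "2 * K \<le> \<beta>"
  proof -
    have "0 < K * (\<alpha> + 2 * L)"
      using K beta_pos \<open>0 < L\<close> by simp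
    then have "0 \<le> K * \<alpha>"
      using alpha_pos \<open>0 < L\<close> by (simp add: zero_less_mult_iff)
    then have "2 * K * L \<le> \<beta> * L"
      using K by (simp add: algebra_simps)
    then show ?thesis
      using \<open>0 < L\<close> by simp
  qed
  show "0 \<le> - \<alpha> * u r - \<beta> * x r * th r + K * (2 * x r * th r) + \<alpha> * (u r + K * x r^2)"
    if "r < b" for r
  proof -
    \<comment> \<open>The choice of K makes the coefficient of x^2 vanish on the edge th = L x of the cone.\<close>
    have "(2 * K - \<beta>) * x r * (L * x r) \<le> (2 * K - \<beta>) * x r * th r"
      using below[OF that] \<open>2 * K \<le> \<beta>\<close> by (intro mult_left_mono_neg) (auto simp: mult_nonpos_nonneg)
    moreover have "\<alpha> * K * x r^2 + (2 * K - \<beta>) * x r * (L * x r) = x r^2 * (K * (\<alpha> + 2 * L) - \<beta> * L)"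
      by (simp add: algebra_simps power2_eq_square)
    moreover have "- \<alpha> * u r - \<beta> * x r * th r + K * (2 * x r * th r) + \<alpha> * (u r + K * x r^2)
        = \<alpha> * K * x r^2 + (2 * K - \<beta>) * x r * th r"
      by (simp add: algebra_simps)
    ultimately show ?thesis
      using K by simp
  qed
  show "((\<lambda>t. u t + K * x t^2) \<longlongrightarrow> 0 + K * 0^2) at_bot"
    by (intro tendsto_intros u_tendsto x_tendsto)
qed (use alpha_pos in auto)

lemma below_cone:
  assumes "0 < L" and slope: "0 < L^2 + lam * L - 1"
    and K: "K * (\<alpha> + 2 * L) = \<beta> * L" "K \<le> 1"
    and pos: "\<And>r. r < t1 \<Longrightarrow> 0 < x r" and "t < t1"
  shows "th t < L * x t"
proof (rule ccontr)
  assume "\<not> th t < L * x t"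
  have "continuous_on UNIV (\<lambda>r. th r - L * x r)"
    by (intro continuous_intros continuous_on_x continuous_on_th)
  moreover have "\<forall>\<^sub>F r in at_bot. 0 < x r"
    using pos by (auto simp: eventually_at_bot_linorder intro: exI[of _ "t1 - 1"])
  then have "\<forall>\<^sub>F r in at_bot. th r - L * x r < 0"
    using below_cone_near_bot[OF \<open>0 < L\<close> slope] by simp
  moreover have "0 \<le> th t - L * x t"
    using \<open>\<not> th t < L * x t\<close> by simp
  ultimately obtain b where b: "b \<le> t" "0 \<le> th b - L * x b" "\<And>r. r < b \<Longrightarrow> th r - L * x r < 0"
    by (rule first_crossing) blast
  have xb: "0 < x b"
    using pos b(1) \<open>t < t1\<close> by simp
  have "0 \<le> u b + K * x b^2"
    using u_lower_bound_below_cone[OF \<open>0 < L\<close> K(1)] b(1,3) pos \<open>t < t1\<close> by fastforce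
  moreover have "K * x b^2 \<le> x b^2"
    using mult_right_mono[OF K(2) zero_le_power2[of "x b"]] by simp
  ultimately have "0 < L^2 + lam * L - 1 + u b + x b^2"
    using slope by linarith
  then have "0 < x b * (L^2 + lam * L - 1 + u b + x b^2)"
    using xb by simp
  moreover have "0 \<le> (- lam * th b - x b * u b + x b - x b ^ 3) - L * th b"
    by (rule deriv_nonneg_at_first_crossing[where f = "\<lambda>r. th r - L * x r", OF _ b(2,3)])
      (intro DERIV_diff DERIV_cmult x_deriv th_deriv)
  moreover have "0 \<le> (lam + L) * (th b - L * x b)"
    using b(2) lam_nonneg \<open>0 < L\<close> by simp
  moreover have "(- lam * th b - x b * u b + x b - x b ^ 3) - L * th b + (lam + L) * (th b - L * x b)
      = - (x b * (L^2 + lam * L - 1 + u b + x b^2))"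
    by (simp add: algebra_simps power2_eq_square power3_eq_cube)
  ultimately show False
    by linarith
qed

lemma u_lower_bound:
  assumes "0 < L" and "0 < L^2 + lam * L - 1"
    and K: "K * (\<alpha> + 2 * L) = \<beta> * L" "K \<le> 1"
    and pos: "\<And>r. r < t1 \<Longrightarrow> 0 < x r" and "t < t1"
  shows "0 \<le> u t + K * x t^2"
proof (rule u_lower_bound_below_cone[OF \<open>0 < L\<close> K(1)])
  fix r
  assume "r < t"
  then have "r < t1"
    using \<open>t < t1\<close> by simp
  then show "0 < x r \<and> th r \<le> L * x r"
    using below_cone[OF assms(1-4) pos] pos by (simp add: less_imp_le)
qed

definition energy :: "real \<Rightarrow> real \<Rightarrow> real" where
  "energy K t = th t^2 - x t^2 + (1 - K) / 2 * x t^4"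

lemma energy_eq: "energy K = (\<lambda>t. th t^2 - x t^2 + (1 - K) / 2 * x t^4)"
  by (simp add: energy_def fun_eq_iff)

lemma energy_deriv:
  "(energy K has_real_derivative - 2 * lam * th t^2 - 2 * x t * th t * (u t + K * x t^2)) (at t)"
  unfolding energy_eq
  by (rule derivative_eq_intros x_deriv th_deriv refl
      | simp add: field_simps power2_eq_square power3_eq_cube)+

lemma energy_tendsto: "(energy K \<longlongrightarrow> 0) at_bot"
proof -
  have "((\<lambda>t. th t^2 - x t^2 + (1 - K) / 2 * x t^4) \<longlongrightarrow> 0^2 - 0^2 + (1 - K) / 2 * 0^4) at_bot"
    by (intro tendsto_intros x_tendsto th_tendsto)
  then show ?thesis
    by (simp add: energy_eq)
qed

lemma energy_antimono:
  assumes "r \<le> s" and inv: "\<And>q. r < q \<Longrightarrow> q < s \<Longrightarrow> 0 < x q \<and> 0 < th q \<and> 0 \<le> u q + K * x q^2"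
  shows "energy K s \<le> energy K r"
proof (rule DERIV_nonpos_imp_decreasing_open[OF assms(1)])
  fix q
  assume "r < q" "q < s"
  then have "0 \<le> x q * th q * (u q + K * x q^2)"
    using inv[OF \<open>r < q\<close> \<open>q < s\<close>] by (intro mult_nonneg_nonneg) auto
  moreover have "0 \<le> lam * th q^2"
    using lam_nonneg by simp
  ultimately have "- 2 * lam * th q^2 - 2 * x q * th q * (u q + K * x q^2) \<le> 0"
    by linarith
  then show "\<exists>y. (energy K has_real_derivative y) (at q) \<and> y \<le> 0"
    using energy_deriv by blast
next
  show "continuous_on {r..s} (energy K)"
    using energy_deriv by (meson DERIV_isCont continuous_at_imp_continuous_on)
qed

lemma energy_nonpos:
  assumes "\<And>q. q < s \<Longrightarrow> 0 < x q \<and> 0 < th q \<and> 0 \<le> u q + K * x q^2"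
  shows "energy K s \<le> 0"
proof -
  have "\<forall>\<^sub>F r in at_bot. energy K s \<le> energy K r"
    unfolding eventually_at_bot_linorder
    by (intro exI[of _ s] allI impI energy_antimono) (use assms in auto)
  then show ?thesis
    using tendsto_lowerbound[OF energy_tendsto _ trivial_limit_at_bot_linorder] by blast
qed

lemma th_pos_left_of_level_crossing:
  assumes K: "K < 1" and big: "2 < (1 - K) * x0^2" and "0 < x0"
    and cross: "x0 \<le> x s" "\<And>r. r < s \<Longrightarrow> x r < x0" and u: "0 \<le> u s + K * x s^2"
  obtains d where "0 < d" "\<And>h. 0 < h \<Longrightarrow> h < d \<Longrightarrow> 0 < th (s - h)"
proof -
  have "((\<lambda>r. x r - x0) has_real_derivative th s) (at s)"
    using DERIV_diff[OF x_deriv DERIV_const] by simp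
  then have "0 \<le> th s"
    by (rule deriv_nonneg_at_first_crossing) (use cross in auto)
  moreover have "- lam * th s - x s * u s + x s - x s ^ 3 < 0" if "th s = 0"
  proof -
    have "(1 - K) * x0^2 \<le> (1 - K) * x s^2"
      using K cross(1) \<open>0 < x0\<close> by (intro mult_left_mono power_mono) auto
    then have "1 - u s - x s^2 < 0"
      using u big by (simp add: algebra_simps)
    then have "x s * (1 - u s - x s^2) < 0"
      using cross(1) \<open>0 < x0\<close> by (simp add: mult_pos_neg)
    then show ?thesis
      using that by (simp add: algebra_simps power2_eq_square power3_eq_cube)
  qed
  ultimately show ?thesis
    using pos_on_left_nbhd[OF th_deriv] that by blast
qed

lemma energy_less_level:
  assumes K: "K < 1" and big: "2 < (1 - K) * x0^2"
    and d: "0 < d" "\<And>h. 0 < h \<Longrightarrow> h < d \<Longrightarrow> 0 < th (s - h)"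
    and inv: "\<And>r. r < s \<Longrightarrow> 0 < x r \<and> x r < x0 \<and> 0 \<le> u r + K * x r^2"
  shows "energy K s < (1 - K) / 2 * x0^4 - x0^2"
proof (rule last_zero_before[OF continuous_on_th d])
  assume "\<And>r. r < s \<Longrightarrow> 0 < th r"
  then have "energy K s \<le> 0"
    by (intro energy_nonpos) (use inv in auto)
  also have "\<dots> < (1 - K) / 2 * x0^4 - x0^2"
    using quartic_strict_mono[of "1 - K" 0 x0] big inv[of "s - 1"] by simp
  finally show ?thesis .
next
  fix r0
  assume r0: "r0 < s" "th r0 = 0" "\<And>r. r0 < r \<Longrightarrow> r < s \<Longrightarrow> 0 < th r"
  have "energy K s \<le> energy K r0"
    by (rule energy_antimono) (use r0 inv in auto)
  also have "\<dots> = (1 - K) / 2 * x r0^4 - x r0^2"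
    using r0(2) by (simp add: energy_def)
  also have "\<dots> < (1 - K) / 2 * x0^4 - x0^2"
  proof (rule quartic_strict_mono)
    have "0 \<le> (1 - K) * x r0^2"
      using K by simp
    then show "2 < (1 - K) * (x r0^2 + x0^2)"
      using big by (simp add: distrib_left)
  qed (use inv[OF r0(1)] in auto)
  finally show ?thesis .
qed

lemma x_below_level:
  assumes K: "K < 1" and big: "2 < (1 - K) * x0^2" and "0 < x0"
    and inv: "\<And>r. r < t1 \<Longrightarrow> 0 < x r \<and> 0 \<le> u r + K * x r^2" and "t < t1"
  shows "x t < x0"
proof (rule ccontr)
  assume "\<not> x t < x0"
  have "continuous_on UNIV (\<lambda>r. x r - x0)"
    by (intro continuous_intros continuous_on_x)
  moreover have "\<forall>\<^sub>F r in at_bot. x r - x0 < 0"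
    using order_tendstoD(2)[OF x_tendsto \<open>0 < x0\<close>] by simp
  moreover have "0 \<le> x t - x0"
    using \<open>\<not> x t < x0\<close> by simp
  ultimately obtain s where s: "s \<le> t" "x0 \<le> x s" "\<And>r. r < s \<Longrightarrow> x r < x0"
    by (rule first_crossing) auto
  have inv_s: "0 < x r \<and> 0 \<le> u r + K * x r^2" if "r \<le> s" for r
    using inv that s(1) \<open>t < t1\<close> by simp
  obtain d where d: "0 < d" "\<And>h. 0 < h \<Longrightarrow> h < d \<Longrightarrow> 0 < th (s - h)"
    using th_pos_left_of_level_crossing[OF K big \<open>0 < x0\<close> s(2,3)] inv_s[of s] by blast
  have "energy K s < (1 - K) / 2 * x0^4 - x0^2"
    by (rule energy_less_level[OF K big d]) (use inv_s s(3) in auto)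
  moreover have "(1 - K) / 2 * x0^4 - x0^2 \<le> (1 - K) / 2 * x s^4 - x s^2"
  proof (cases "x s = x0")
    case False
    show ?thesis
    proof (rule less_imp_le, rule quartic_strict_mono)
      have "0 \<le> (1 - K) * x s^2"
        using K by simp
      then show "2 < (1 - K) * (x0^2 + x s^2)"
        using big by (simp add: distrib_left)
    qed (use False s(2) \<open>0 < x0\<close> in auto)
  qed simp
  ultimately show False
    unfolding energy_def using zero_le_power2[of "th s"] by linarith
qed

lemma u_upper_bound:
  assumes "\<And>r. r < t \<Longrightarrow> x r^2 \<le> c"
  shows "u t \<le> \<beta> / 2 * (c - x t^2)"
proof -
  have "0 \<le> \<beta> / 2 * (c - x t^2) - u t"
  proof (rule integrating_factor_nonneg[where a = \<alpha> and q = "\<lambda>t. \<beta> / 2 * (c - x t^2) - u t"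
        and t = t and b = t and l = "\<beta> / 2 * (c - 0^2) - 0"])
    show "((\<lambda>t. \<beta> / 2 * (c - x t^2) - u t) has_real_derivative \<alpha> * u s) (at s)" for s
      by (rule derivative_eq_intros x_deriv u_deriv refl | simp add: algebra_simps)+
    show "0 \<le> \<alpha> * u r + \<alpha> * (\<beta> / 2 * (c - x r^2) - u r)" if "r < t" for r
      using assms[OF that] alpha_pos beta_pos by (simp add: algebra_simps)
    show "((\<lambda>t. \<beta> / 2 * (c - x t^2) - u t) \<longlongrightarrow> \<beta> / 2 * (c - 0^2) - 0) at_bot"
      by (intro tendsto_intros x_tendsto u_tendsto)
  qed (use alpha_pos in auto)
  then show ?thesis
    by simp
qed

lemma slope_lower_bound:
  assumes "0 < a" and roots: "a - r = lam" "a * r = 1 - (1 + \<beta> / 2) * c"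
    and below: "\<And>q. q < t \<Longrightarrow> 0 < x q \<and> x q^2 \<le> c"
  shows "r * x t \<le> th t"
proof -
  have "0 \<le> th t - r * x t"
  proof (rule integrating_factor_nonneg[where a = a and q = "\<lambda>t. th t - r * x t"
        and t = t and b = t and l = "0 - r * 0"])
    show "((\<lambda>t. th t - r * x t) has_real_derivative
        (- lam * th s - x s * u s + x s - x s ^ 3) - r * th s) (at s)" for s
      by (intro DERIV_diff DERIV_cmult x_deriv th_deriv)
    show "0 \<le> (- lam * th q - x q * u q + x q - x q ^ 3) - r * th q + a * (th q - r * x q)"
      if "q < t" for q
    proof -
      have "u q \<le> \<beta> / 2 * (c - x q^2)"
        by (rule u_upper_bound) (use below that in auto)
      moreover have "0 \<le> \<beta> * x q^2"
        using beta_pos by simp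
      ultimately have "0 \<le> (1 + \<beta> / 2) * c - u q - x q^2"
        using below[OF that] by (simp add: algebra_simps)
      then have "0 \<le> x q * ((1 + \<beta> / 2) * c - u q - x q^2)"
        using below[OF that] by simp
      moreover have "(- lam * th q - x q * u q + x q - x q ^ 3) - r * th q + a * (th q - r * x q)
          = (a - r - lam) * th q + x q * (1 - a * r - u q - x q^2)"
        by (simp add: algebra_simps power2_eq_square power3_eq_cube)
      ultimately show ?thesis
        using roots by simp
    qed
    show "((\<lambda>t. th t - r * x t) \<longlongrightarrow> 0 - r * 0) at_bot"
      by (intro tendsto_intros x_tendsto th_tendsto)
  qed (use \<open>0 < a\<close> in auto)
  then show ?thesis
    by simp
qed

lemma x_pos_if_below_level:
  assumes disc: "4 * ((1 + \<beta> / 2) * x0^2 - 1) < lam^2"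
    and below: "\<And>q. q < t1 \<Longrightarrow> 0 < x q \<and> x q < x0"
  shows "0 < x t1"
proof -
  define D where "D = lam^2 - 4 * ((1 + \<beta> / 2) * x0^2 - 1)"
  \<comment> \<open>a and -r are the roots of z^2 - lam z + (1 + beta/2) x0^2 - 1, real by the hypothesis on lam.\<close>
  define a where "a = (lam + sqrt D) / 2"
  define r where "r = (sqrt D - lam) / 2"
  have "0 < D"
    using disc by (simp add: D_def)
  then have "0 < a"
    using lam_nonneg by (simp add: a_def add_nonneg_pos)
  have roots: "a - r = lam" "a * r = 1 - (1 + \<beta> / 2) * x0^2"
  proof -
    show "a - r = lam"
      by (simp add: a_def r_def field_simps)
    have "a * r = (sqrt D^2 - lam^2) / 4"
      by (simp add: a_def r_def power2_eq_square algebra_simps)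
    then show "a * r = 1 - (1 + \<beta> / 2) * x0^2"
      using \<open>0 < D\<close> by (simp add: D_def algebra_simps)
  qed
  have slope: "r * x q \<le> th q" if "q \<le> t1" for q
  proof (rule slope_lower_bound[OF \<open>0 < a\<close> roots])
    fix p
    assume "p < q"
    then show "0 < x p \<and> x p^2 \<le> x0^2"
      using below[of p] that by (simp add: power_mono)
  qed
  have "exp (- r * (t1 - 1)) * x (t1 - 1) \<le> exp (- r * t1) * x t1"
  proof (rule deriv_nonneg_imp_mono[of "t1 - 1" t1])
    show "((\<lambda>t. exp (- r * t) * x t) has_real_derivative exp (- r * q) * (th q - r * x q)) (at q)"
      for q by (rule derivative_eq_intros x_deriv refl | simp add: algebra_simps)+
    show "0 \<le> exp (- r * q) * (th q - r * x q)" if "q \<in> {t1 - 1..t1}" for q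
      using slope[of q] that by simp
  qed simp
  moreover have "0 < exp (- r * (t1 - 1)) * x (t1 - 1)"
    using below[of "t1 - 1"] by simp
  ultimately have "0 < exp (- r * t1) * x t1"
    by linarith
  then show ?thesis
    by (simp add: zero_less_mult_iff)
qed

lemma x_pos:
  assumes "0 < L" and slope: "0 < L^2 + lam * L - 1"
    and K: "K * (\<alpha> + 2 * L) = \<beta> * L" "K < 1"
    and "0 < x0" and big: "2 < (1 - K) * x0^2"
    and disc: "4 * ((1 + \<beta> / 2) * x0^2 - 1) < lam^2"
    and pos: "\<forall>\<^sub>F t in at_bot. 0 < x t"
  shows "0 < x t"
proof (rule ccontr)
  assume "\<not> 0 < x t"
  have "continuous_on UNIV (\<lambda>t. - x t)"
    by (intro continuous_intros continuous_on_x)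
  moreover have "\<forall>\<^sub>F t in at_bot. - x t < 0"
    using pos by simp
  moreover have "0 \<le> - x t"
    using \<open>\<not> 0 < x t\<close> by simp
  ultimately obtain t1 where t1: "x t1 \<le> 0" "\<And>r. r < t1 \<Longrightarrow> 0 < x r"
    by (rule first_crossing) auto
  have "0 \<le> u r + K * x r^2" if "r < t1" for r
    using u_lower_bound[OF \<open>0 < L\<close> slope K(1) less_imp_le[OF K(2)] t1(2) that] .
  then have "x r < x0" if "r < t1" for r
    using x_below_level[OF K(2) big \<open>0 < x0\<close>] t1(2) that by blast
  then have "0 < x t1"
    using x_pos_if_below_level[OF disc] t1(2) by blast
  with t1(1) show False
    by simp
qed

end

theorem lemma3:
  fixes \<alpha> lam \<beta> L th0 x0 :: real
    and x th u :: "real \<Rightarrow> real"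
  assumes par: "\<alpha> > 0" "lam \<ge> 0" "\<beta> > 0"
    and par_ineq: "\<alpha> * (sqrt (lam^2 + 4) + lam) > 2 * (\<beta> - 2)"
    and L: "L > 0" "L > (sqrt (lam^2 + 4) - lam) / 2" "\<beta> * L / (\<alpha> + 2 * L) < 1"
    and th0pos: "th0 > 0"
    and x0: "x0 > 0"
      "th0^2 + x0^2 - (1 - \<beta> * L / (\<alpha> + 2 * L)) / 2 * x0^4 = 0"
    and lamcond: "lam^2 > 4 * ((1 + \<beta> / 2) * x0^2 - 1)"
    and ode: "\<And>t. (x has_real_derivative th t) (at t)"
      "\<And>t. (th has_real_derivative
               (- lam * th t - x t * u t + x t - x t ^ 3)) (at t)"
      "\<And>t. (u has_real_derivative (- \<alpha> * u t - \<beta> * x t * th t)) (at t)"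
    and lim: "(x \<longlongrightarrow> 0) at_bot" "(th \<longlongrightarrow> 0) at_bot" "(u \<longlongrightarrow> 0) at_bot"
    and nontriv: "\<exists>t. (x t, th t, u t) \<noteq> (0, 0, 0)"
    and pos: "\<forall>\<^sub>F t in at_bot. x t > 0"
  shows "\<forall>t. x t > 0"
proof -
  \<comment> \<open>par_ineq only guarantees that an admissible L exists, and nontriv follows from pos.\<close>
  interpret separatrix_solution \<alpha> lam \<beta> x th u
    by unfold_locales (use par ode lim in auto)
  define K where "K = \<beta> * L / (\<alpha> + 2 * L)"
  have K: "K * (\<alpha> + 2 * L) = \<beta> * L" "K < 1"
    using par L by (auto simp: K_def)
  have "0 < th0^2"
    using th0pos by simp
  also have "th0^2 = x0^2 * ((1 - K) / 2 * x0^2 - 1)"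
    using x0(2) by (simp add: K_def algebra_simps power2_eq_square power4_eq_xxxx)
  finally have "2 < (1 - K) * x0^2"
    using x0(1) by (simp add: zero_less_mult_iff)
  then show ?thesis
    using x_pos[OF L(1) quadratic_pos_above_root[OF L(2)] K x0(1) _ lamcond pos] by blast
qed

end
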